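(* In the abstract boundary problem setting with an invertible reference operator described in the context, for all $u,v\in\mathcal D(T^* )$, $$\langle T^*u,v\rangle-\langle u,T^*v\rangle=\langle\bm\Gamma_1u,\Gamma_0v\rangle_{K,K'}-\langle\Gamma_0u,\bm\Gamma_1v\rangle_{K',K}.$$ (Here $\bm\Gamma_1u,\bm\Gamma_1v\in K$.)
   Context: Inner products are linear in the first argument and conjugate-linear in the second. Let $H_0$ be a separable Hilbert space with inner product $\langle\cdot,\cdot\rangle$, let $T$ be a closed densely defined symmetric operator in $H_0$ with adjoint $T^*$, and equip $\mathcal D(T^* )$ with the graph norm. Let $H_1\subset H_0$ be a dense subspace which is a Hilbert space in its own right with bounded inclusion $H_1\to H_0$. Let $K^\partial$ be a separable Hilbert space with inner product $\langle\cdot,\cdot\rangle_\partial$ and $K\subset K^\partial$ a dense subspace which is a Hilbert space in its own right with bounded inclusion. Let $K'$ be the space of continuous anti-linear functionals on $K$ (a Hilbert space with the dual norm); $K^\partial$ is regarded as a dense subspace of $K'$ via $y\mapsto(x\mapsto\langle y,x\rangle_\partial)$, so $K\subset K^\partial\subset K'$. For $y\in K'$, $x\in K$ put $\langle y,x\rangle_{K',K}=y(x)$ and $\langle x,y\rangle_{K,K'}=\overline{y(x)}$; these agree with $\langle\cdot,\cdot\rangle_\partial$ when $y\in K^\partial$. Standing assumptions: $H_1\subset\mathcal D(T^* )$ and $H_1$ is dense in $\mathcal D(T^* )$ in the graph norm; $T^*|_{H_1}:H_1\to H_0$ is bounded; $\gamma_0,\gamma_1:H_1\to K$ are bounded linear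 operators such that $\gamma=\gamma_0\oplus\gamma_1:H_1\to K\oplus K$ is surjective; $\operatorname{Ker}\gamma$ is dense in $H_0$ and $\mathcal D(T)=\operatorname{Ker}\gamma$; and the Lagrange identity $\langle T^*u,v\rangle-\langle u,T^*v\rangle=\langle\gamma_1u,\gamma_0v\rangle_\partial-\langle\gamma_0u,\gamma_1v\rangle_\partial$ holds for all $u,v\in H_1$. $\Gamma_0,\Gamma_1:\mathcal D(T^* )\to K'$ denote the (existing, unique) continuous extensions of $\gamma_0,\gamma_1$; they satisfy $\langle T^*u,v\rangle-\langle u,T^*v\rangle=\langle\Gamma_1u,\Gamma_0v\rangle_{K',K}-\langle\Gamma_0u,\Gamma_1v\rangle_{K',K}$ for $u\in\mathcal D(T^* )$, $v\in H_1$. Moreover $A$ is a self-adjoint operator in $H_0$ with $T\subset A\subset T^*$, $\mathcal D(A)=\operatorname{Ker}\gamma_0$ (so $\mathcal D(A)\subset H_1$), and $A$ has a bounded everywhere defined inverse. Then $\mathcal D(T^* )=\mathcal D(A)\dotplus\operatorname{Ker}T^*$ topologically, with projections $p=A^{-1}T^*$ onto $\mathcal D(A)$ and $k=1-p$ onto $\operatorname{Ker}T^*$, and $\Gamma_0$ restricts to a topological isomorphism $\operatorname{Ker}T^*\to K'$; let $\bm\gamma(0):K'\to\operatorname{Ker}T^*$ be its inverse, $M(0)=\Gamma_1\circ\bm\gamma(0):K'\to K'$, and define the reduced boundary operator $\bm\Gamma_1=\Gamma_1-M(0)\circ\Gamma_0:\mathcal D(T^* )\to K'$. *)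

theory Defs
  imports "HOL-Analysis.Analysis"
begin

text \<open>Complex Hilbert spaces are modelled explicitly: a carrier type with an additive
group structure, a complex scalar multiplication sm and an inner product ip
(linear in the first, conjugate-linear in the second argument); the norm is the
one induced by ip.\<close>

definition cvs :: "(complex \<Rightarrow> 'a::ab_group_add \<Rightarrow> 'a) \<Rightarrow> bool" where
  "cvs sm \<longleftrightarrow> (\<forall>a x y. sm a (x + y) = sm a x + sm a y) \<and>
     (\<forall>a b x. sm (a + b) x = sm a x + sm b x) \<and>
     (\<forall>a b x. sm a (sm b x) = sm (a * b) x) \<and> (\<forall>x. sm 1 x = x)"

definition is_inner :: "(complex \<Rightarrow> 'a::ab_group_add \<Rightarrow> 'a) \<Rightarrow> ('a \<Rightarrow> 'a \<Rightarrow> complex) \<Rightarrow> bool" where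
  "is_inner sm ip \<longleftrightarrow> (\<forall>x y z. ip (x + y) z = ip x z + ip y z) \<and>
     (\<forall>a x y. ip (sm a x) y = a * ip x y) \<and> (\<forall>x y. ip y x = cnj (ip x y)) \<and>
     (\<forall>x. 0 \<le> Re (ip x x)) \<and> (\<forall>x. ip x x = 0 \<longrightarrow> x = 0)"

definition hnorm :: "('a \<Rightarrow> 'a \<Rightarrow> complex) \<Rightarrow> 'a \<Rightarrow> real" where
  "hnorm ip x = sqrt (Re (ip x x))"

definition hcomplete :: "('a::ab_group_add \<Rightarrow> 'a \<Rightarrow> complex) \<Rightarrow> bool" where
  "hcomplete ip \<longleftrightarrow> (\<forall>X :: nat \<Rightarrow> 'a.
     (\<forall>e>0. \<exists>N. \<forall>m\<ge>N. \<forall>n\<ge>N. hnorm ip (X m - X n) < e) \<longrightarrow>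
     (\<exists>l. (\<lambda>n. hnorm ip (X n - l)) \<longlonglongrightarrow> 0))"

definition hilbert :: "(complex \<Rightarrow> 'a::ab_group_add \<Rightarrow> 'a) \<Rightarrow> ('a \<Rightarrow> 'a \<Rightarrow> complex) \<Rightarrow> bool" where
  "hilbert sm ip \<longleftrightarrow> cvs sm \<and> is_inner sm ip \<and> hcomplete ip"

definition hdense :: "('a::ab_group_add \<Rightarrow> 'a \<Rightarrow> complex) \<Rightarrow> 'a set \<Rightarrow> bool" where
  "hdense ip S \<longleftrightarrow> (\<forall>x e. e > 0 \<longrightarrow> (\<exists>d\<in>S. hnorm ip (x - d) < e))"

definition hseparable :: "('a::ab_group_add \<Rightarrow> 'a \<Rightarrow> complex) \<Rightarrow> bool" where
  "hseparable ip \<longleftrightarrow> (\<exists>D. countable D \<and> hdense ip D)"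

definition clinear_on :: "(complex \<Rightarrow> 'a::ab_group_add \<Rightarrow> 'a) \<Rightarrow> (complex \<Rightarrow> 'b::ab_group_add \<Rightarrow> 'b)
    \<Rightarrow> 'a set \<Rightarrow> ('a \<Rightarrow> 'b) \<Rightarrow> bool" where
  "clinear_on sm1 sm2 S f \<longleftrightarrow> (\<forall>x\<in>S. \<forall>y\<in>S. f (x + y) = f x + f y) \<and>
     (\<forall>a. \<forall>x\<in>S. f (sm1 a x) = sm2 a (f x))"

definition bounded_op :: "('a \<Rightarrow> 'a \<Rightarrow> complex) \<Rightarrow> ('b \<Rightarrow> 'b \<Rightarrow> complex) \<Rightarrow> 'a set \<Rightarrow> ('a \<Rightarrow> 'b) \<Rightarrow> bool" where
  "bounded_op ip1 ip2 S f \<longleftrightarrow> (\<exists>C. \<forall>x\<in>S. hnorm ip2 (f x) \<le> C * hnorm ip1 x)"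

definition closed_op :: "('a::ab_group_add \<Rightarrow> 'a \<Rightarrow> complex) \<Rightarrow> 'a set \<Rightarrow> ('a \<Rightarrow> 'a) \<Rightarrow> bool" where
  "closed_op ip D T \<longleftrightarrow> (\<forall>X x y. (\<forall>n. X n \<in> D) \<and> (\<lambda>n. hnorm ip (X n - x)) \<longlonglongrightarrow> 0
       \<and> (\<lambda>n. hnorm ip (T (X n) - y)) \<longlonglongrightarrow> 0 \<longrightarrow> x \<in> D \<and> T x = y)"

definition symmetric_op :: "('a \<Rightarrow> 'a \<Rightarrow> complex) \<Rightarrow> 'a set \<Rightarrow> ('a \<Rightarrow> 'a) \<Rightarrow> bool" where
  "symmetric_op ip D T \<longleftrightarrow> (\<forall>u\<in>D. \<forall>v\<in>D. ip (T u) v = ip u (T v))"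

text \<open>(Ds, Ts) is the adjoint of (D, T) (D dense, so Ts is well defined).\<close>
definition is_adjoint :: "('a \<Rightarrow> 'a \<Rightarrow> complex) \<Rightarrow> 'a set \<Rightarrow> ('a \<Rightarrow> 'a) \<Rightarrow> 'a set \<Rightarrow> ('a \<Rightarrow> 'a) \<Rightarrow> bool" where
  "is_adjoint ip D T Ds Ts \<longleftrightarrow> Ds = {v. \<exists>w. \<forall>u\<in>D. ip (T u) v = ip u w} \<and>
     (\<forall>v\<in>Ds. \<forall>u\<in>D. ip (T u) v = ip u (Ts v))"

definition self_adjoint_op :: "('a \<Rightarrow> 'a \<Rightarrow> complex) \<Rightarrow> 'a set \<Rightarrow> ('a \<Rightarrow> 'a) \<Rightarrow> bool" where
  "self_adjoint_op ip D A \<longleftrightarrow> is_adjoint ip D A D A"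

definition graph_norm :: "('a \<Rightarrow> 'a \<Rightarrow> complex) \<Rightarrow> ('a \<Rightarrow> 'a) \<Rightarrow> 'a \<Rightarrow> real" where
  "graph_norm ip Ts u = sqrt ((hnorm ip u)\<^sup>2 + (hnorm ip (Ts u))\<^sup>2)"

definition antidual :: "(complex \<Rightarrow> 'k::ab_group_add \<Rightarrow> 'k) \<Rightarrow> ('k \<Rightarrow> 'k \<Rightarrow> complex) \<Rightarrow> ('k \<Rightarrow> complex) set" where
  "antidual smk ipk = {f. (\<forall>x y. f (x + y) = f x + f y) \<and> (\<forall>a x. f (smk a x) = cnj a * f x) \<and>
     (\<exists>C. \<forall>x. cmod (f x) \<le> C * hnorm ipk x)}"

definition dual_norm :: "('k \<Rightarrow> 'k \<Rightarrow> complex) \<Rightarrow> ('k \<Rightarrow> complex) \<Rightarrow> real" where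
  "dual_norm ipk f = Sup {cmod (f x) | x. hnorm ipk x \<le> 1}"

definition embd :: "('d \<Rightarrow> 'd \<Rightarrow> complex) \<Rightarrow> ('k \<Rightarrow> 'd) \<Rightarrow> 'd \<Rightarrow> ('k \<Rightarrow> complex)" where
  "embd ipd iK y = (\<lambda>x. ipd y (iK x))"

definition embK :: "('d \<Rightarrow> 'd \<Rightarrow> complex) \<Rightarrow> ('k \<Rightarrow> 'd) \<Rightarrow> 'k \<Rightarrow> ('k \<Rightarrow> complex)" where
  "embK ipd iK a = embd ipd iK (iK a)"

definition pair_KpK :: "('k \<Rightarrow> complex) \<Rightarrow> 'k \<Rightarrow> complex" where
  "pair_KpK y x = y x"

definition pair_KKp :: "'k \<Rightarrow> ('k \<Rightarrow> complex) \<Rightarrow> complex" where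
  "pair_KKp x y = cnj (y x)"

definition dual_linear_on :: "(complex \<Rightarrow> 'a::ab_group_add \<Rightarrow> 'a) \<Rightarrow> 'a set \<Rightarrow> ('a \<Rightarrow> 'k \<Rightarrow> complex) \<Rightarrow> bool" where
  "dual_linear_on sm S G \<longleftrightarrow> (\<forall>u\<in>S. \<forall>v\<in>S. \<forall>x. G (u + v) x = G u x + G v x) \<and>
     (\<forall>a. \<forall>u\<in>S. \<forall>x. G (sm a u) x = a * G u x)"

definition graph_bounded :: "('a \<Rightarrow> 'a \<Rightarrow> complex) \<Rightarrow> ('a \<Rightarrow> 'a) \<Rightarrow> ('k \<Rightarrow> 'k \<Rightarrow> complex) \<Rightarrow> 'a set
    \<Rightarrow> ('a \<Rightarrow> 'k \<Rightarrow> complex) \<Rightarrow> bool" where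
  "graph_bounded ip Ts ipk S G \<longleftrightarrow> (\<exists>C. \<forall>u\<in>S. dual_norm ipk (G u) \<le> C * graph_norm ip Ts u)"

definition kerTs :: "'a set \<Rightarrow> ('a \<Rightarrow> 'a::zero) \<Rightarrow> 'a set" where
  "kerTs Ds Ts = {u \<in> Ds. Ts u = 0}"

definition gamma_zero :: "'a set \<Rightarrow> ('a \<Rightarrow> 'a::zero) \<Rightarrow> ('a \<Rightarrow> 'k \<Rightarrow> complex) \<Rightarrow> ('k \<Rightarrow> complex) \<Rightarrow> 'a" where
  "gamma_zero Ds Ts G0 y = the_inv_into (kerTs Ds Ts) G0 y"

definition M_zero :: "'a set \<Rightarrow> ('a \<Rightarrow> 'a::zero) \<Rightarrow> ('a \<Rightarrow> 'k \<Rightarrow> complex) \<Rightarrow> ('a \<Rightarrow> 'k \<Rightarrow> complex)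
    \<Rightarrow> ('k \<Rightarrow> complex) \<Rightarrow> ('k \<Rightarrow> complex)" where
  "M_zero Ds Ts G0 G1 y = G1 (gamma_zero Ds Ts G0 y)"

definition red_Gamma1 :: "'a set \<Rightarrow> ('a \<Rightarrow> 'a::zero) \<Rightarrow> ('a \<Rightarrow> 'k \<Rightarrow> complex) \<Rightarrow> ('a \<Rightarrow> 'k \<Rightarrow> complex)
    \<Rightarrow> 'a \<Rightarrow> ('k \<Rightarrow> complex)" where
  "red_Gamma1 Ds Ts G0 G1 u = (\<lambda>x. G1 u x - M_zero Ds Ts G0 G1 (G0 u) x)"

end

theory Submission
  imports Defs
begin

text \<open>Every x in D(T^*) splits as x = p + k with p = A^-1 T^* x in D(A) = Ker \<gamma>0 and k in Ker T^*.
  Since \<Gamma>0 vanishes on D(A), \<gamma>(0) \<Gamma>0 x = k, so the reduced operator only sees the regular part: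
  \<Gamma>1 x - M(0) \<Gamma>0 x = \<gamma>1 p, an element of K. The Lagrange identity for the regular parts, together
  with T^* k = 0 for the kernel parts, then gives the reduced Green formula.\<close>

lemma ip_add2: "is_inner sm ip \<Longrightarrow> ip x (y + z) = ip x y + ip x z"
  unfolding is_inner_def by (metis complex_cnj_add)

lemma ip_diff1: "is_inner sm ip \<Longrightarrow> ip (y - z) x = ip y x - ip z x"
  unfolding is_inner_def by (metis add_diff_cancel_right' diff_add_cancel eq_diff_eq)

lemma ip_diff2: "is_inner sm ip \<Longrightarrow> ip x (y - z) = ip x y - ip x z"
  using ip_diff1[of sm ip y z x] unfolding is_inner_def by (metis complex_cnj_diff)

lemma ip_zero1: "is_inner sm ip \<Longrightarrow> ip 0 x = 0"
  using ip_diff1[of sm ip 0 0 x] by simp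

lemma ip_self_real:
  assumes "is_inner sm ip"
  shows "ip x x = complex_of_real (Re (ip x x))"
proof -
  have "ip x x = cnj (ip x x)" using assms unfolding is_inner_def by metis
  then have "Im (ip x x) = 0" by (simp add: complex_eq_iff)
  then show ?thesis by (simp add: complex_eq_iff)
qed

lemma ip_self_less_sq:
  assumes "is_inner sm ip" and "hnorm ip x < e"
  shows "Re (ip x x) < e\<^sup>2"
proof -
  have nonneg: "Re (ip x x) \<ge> 0" using assms(1) unfolding is_inner_def by blast
  have "sqrt (Re (ip x x)) < e" using assms(2) unfolding hnorm_def .
  then have "(sqrt (Re (ip x x)))\<^sup>2 < e\<^sup>2" using nonneg by (intro power_strict_mono) auto
  then show ?thesis using nonneg by simp
qed

lemma hdense_orthogonal_eq_zero:
  assumes I: "is_inner sm ip" and dense: "hdense ip D" and orth: "\<forall>d\<in>D. ip d z = 0"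
  shows "z = 0"
proof -
  have small: "Re (ip z z) < e\<^sup>2" if "e > 0" for e
  proof -
    obtain d where d: "d \<in> D" "hnorm ip (z - d) < e"
      using dense \<open>e > 0\<close> unfolding hdense_def by blast
    have "ip z z = ip (z - d) z" using ip_diff1[OF I, of z d z] orth d(1) by simp
    also have "\<dots> = ip (z - d) (z - d) + ip (z - d) d" using ip_add2[OF I, of "z - d" "z - d" d] by simp
    also have "ip (z - d) d = cnj (ip d z) - ip d d"
      using ip_diff1[OF I, of z d d] I unfolding is_inner_def by metis
    finally have "ip z z = ip (z - d) (z - d) - ip d d" using orth d(1) by simp
    moreover have "Re (ip d d) \<ge> 0" using I unfolding is_inner_def by blast
    ultimately show ?thesis using ip_self_less_sq[OF I d(2)] by simp
  qed
  have "Re (ip z z) \<le> 0"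
  proof (rule ccontr)
    assume "\<not> Re (ip z z) \<le> 0"
    then show False using small[of "sqrt (Re (ip z z))"] by simp
  qed
  moreover have "Re (ip z z) \<ge> 0" using I unfolding is_inner_def by blast
  ultimately have "ip z z = 0" using ip_self_real[OF I, of z] by simp
  then show ?thesis using I unfolding is_inner_def by blast
qed

lemma adjoint_domain_diff:
  assumes I: "is_inner sm ip" and adj: "is_adjoint ip D T Ds Ts" and "x \<in> Ds" "y \<in> Ds"
  shows "x - y \<in> Ds"
proof -
  have Ds: "Ds = {v. \<exists>w. \<forall>u\<in>D. ip (T u) v = ip u w}" using adj unfolding is_adjoint_def by blast
  obtain w1 w2 where "\<forall>u\<in>D. ip (T u) x = ip u w1" "\<forall>u\<in>D. ip (T u) y = ip u w2"
    using assms(3,4) Ds by blast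
  then have "\<forall>u\<in>D. ip (T u) (x - y) = ip u (w1 - w2)" using ip_diff2[OF I] by metis
  then show ?thesis using Ds by blast
qed

lemma adjoint_diff:
  assumes I: "is_inner sm ip" and dense: "hdense ip D" and adj: "is_adjoint ip D T Ds Ts"
    and x: "x \<in> Ds" and y: "y \<in> Ds"
  shows "Ts (x - y) = Ts x - Ts y"
proof -
  have Ts: "\<forall>v\<in>Ds. \<forall>u\<in>D. ip (T u) v = ip u (Ts v)" using adj unfolding is_adjoint_def by blast
  have xy: "x - y \<in> Ds" using adjoint_domain_diff[OF I adj x y] .
  have "\<forall>d\<in>D. ip d (Ts (x - y) - (Ts x - Ts y)) = 0"
  proof
    fix d assume d: "d \<in> D"
    have "ip d (Ts (x - y)) = ip (T d) x - ip (T d) y" using Ts xy d ip_diff2[OF I] by metis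
    also have "\<dots> = ip d (Ts x - Ts y)" using Ts x y d ip_diff2[OF I] by metis
    finally show "ip d (Ts (x - y) - (Ts x - Ts y)) = 0" using ip_diff2[OF I] by simp
  qed
  then show ?thesis using hdense_orthogonal_eq_zero[OF I dense] by (metis eq_iff_diff_eq_0)
qed

lemma adjoint_domain_split:
  assumes I: "is_inner sm ip" and dense: "hdense ip D" and adj: "is_adjoint ip D T Ds Ts"
    and ATs: "DA \<subseteq> Ds" "\<forall>x\<in>DA. A x = Ts x"
    and B: "\<forall>y. B y \<in> DA \<and> A (B y) = y" and x: "x \<in> Ds"
  shows "B (Ts x) \<in> DA" "Ts (B (Ts x)) = Ts x" "x - B (Ts x) \<in> kerTs Ds Ts"
proof -
  show p: "B (Ts x) \<in> DA" using B by blast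
  then show Tp: "Ts (B (Ts x)) = Ts x" using B ATs(2) by metis
  have "B (Ts x) \<in> Ds" using p ATs(1) by blast
  then show "x - B (Ts x) \<in> kerTs Ds Ts"
    using adjoint_domain_diff[OF I adj x] adjoint_diff[OF I dense adj x] Tp
    unfolding kerTs_def by simp
qed

lemma red_Gamma1_split:
  assumes lin: "dual_linear_on sm Ds \<Gamma>0" "dual_linear_on sm Ds \<Gamma>1"
    and inj: "inj_on \<Gamma>0 (kerTs Ds Ts)"
    and p: "p \<in> Ds" "\<Gamma>0 p = (\<lambda>_. 0)" and k: "k \<in> kerTs Ds Ts"
  shows "\<Gamma>0 (p + k) = \<Gamma>0 k" "red_Gamma1 Ds Ts \<Gamma>0 \<Gamma>1 (p + k) = \<Gamma>1 p"
proof -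
  have kD: "k \<in> Ds" using k unfolding kerTs_def by blast
  show G0: "\<Gamma>0 (p + k) = \<Gamma>0 k" using lin(1) p kD unfolding dual_linear_on_def by auto
  have "gamma_zero Ds Ts \<Gamma>0 (\<Gamma>0 (p + k)) = k"
    unfolding gamma_zero_def G0 using the_inv_into_f_f[OF inj k] .
  then show "red_Gamma1 Ds Ts \<Gamma>0 \<Gamma>1 (p + k) = \<Gamma>1 p"
    using lin(2) p kD unfolding red_Gamma1_def M_zero_def dual_linear_on_def by auto
qed

lemma antidual_zero:
  assumes "f \<in> antidual smk ipk"
  shows "f 0 = 0"
proof -
  have "f (0 + 0) = f 0 + f 0" using assms unfolding antidual_def by blast
  then show ?thesis by simp
qed

lemma embK_zero:
  assumes "is_inner smd ipd" and "clinear_on smk smd UNIV iK"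
  shows "embK ipd iK 0 = (\<lambda>_. 0)"
proof -
  have "iK 0 = 0" using assms(2) unfolding clinear_on_def by (metis add_0 add_cancel_right_right UNIV_I)
  then show ?thesis using ip_zero1[OF assms(1)] unfolding embK_def embd_def by simp
qed

lemma Ds_split_Ker_gamma0:
  assumes I: "is_inner sm ip" and Id: "is_inner smd ipd" and iK_lin: "clinear_on smk smd UNIV iK"
    and dense: "hdense ip D" and adj: "is_adjoint ip D T Ds Ts"
    and ATs: "DA \<subseteq> Ds" "\<forall>x\<in>DA. A x = Ts x" and B: "\<forall>y. B y \<in> DA \<and> A (B y) = y"
    and DA: "DA = \<iota> ` {w. \<gamma>0 w = 0}" and H1_sub: "range \<iota> \<subseteq> Ds"
    and \<Gamma>_lin: "dual_linear_on sm Ds \<Gamma>0" "dual_linear_on sm Ds \<Gamma>1"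
    and Ker_inj: "inj_on \<Gamma>0 (kerTs Ds Ts)"
    and \<Gamma>_ext: "\<forall>w. \<Gamma>0 (\<iota> w) = embK ipd iK (\<gamma>0 w)" "\<forall>w. \<Gamma>1 (\<iota> w) = embK ipd iK (\<gamma>1 w)"
    and x: "x \<in> Ds"
  shows "\<exists>w k. \<gamma>0 w = 0 \<and> k \<in> kerTs Ds Ts \<and> x = \<iota> w + k \<and> Ts (\<iota> w) = Ts x \<and>
      \<Gamma>0 x = \<Gamma>0 k \<and> red_Gamma1 Ds Ts \<Gamma>0 \<Gamma>1 x = embK ipd iK (\<gamma>1 w)"
proof -
  note p = adjoint_domain_split[OF I dense adj ATs B x]
  obtain w where w: "B (Ts x) = \<iota> w" "\<gamma>0 w = 0" using p(1) DA by blast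
  have "\<Gamma>0 (\<iota> w) = (\<lambda>_. 0)" using \<Gamma>_ext(1) w(2) embK_zero[OF Id iK_lin] by simp
  note red = red_Gamma1_split[OF \<Gamma>_lin Ker_inj _ this p(3)]
  have "x = \<iota> w + (x - \<iota> w)" by simp
  then show ?thesis
    using red H1_sub \<Gamma>_ext(2) p(2) p(3) w by (intro exI[of _ w] exI[of _ "x - \<iota> w"]) auto
qed

lemma Lagrange_ext_Ker_gamma0:
  assumes Lagrange_ext: "\<forall>x\<in>Ds. \<forall>z. ip (Ts x) (\<iota> z) - ip x (Ts (\<iota> z)) =
                       pair_KpK (\<Gamma>1 x) (\<gamma>0 z) - pair_KpK (\<Gamma>0 x) (\<gamma>1 z)"
    and \<Gamma>1_range: "\<forall>x\<in>Ds. \<Gamma>1 x \<in> antidual smk ipk"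
    and "x \<in> Ds" and "\<gamma>0 z = 0"
  shows "ip (Ts x) (\<iota> z) - ip x (Ts (\<iota> z)) = - \<Gamma>0 x (\<gamma>1 z)"
proof -
  have "\<Gamma>1 x 0 = 0" using antidual_zero \<Gamma>1_range \<open>x \<in> Ds\<close> by blast
  then show ?thesis using Lagrange_ext assms(3,4) unfolding pair_KpK_def by simp
qed

theorem lemma4p8:
  fixes sm :: "complex \<Rightarrow> 'h::ab_group_add \<Rightarrow> 'h" and ip :: "'h \<Rightarrow> 'h \<Rightarrow> complex"
    and sm1 :: "complex \<Rightarrow> 'h1::ab_group_add \<Rightarrow> 'h1" and ip1 :: "'h1 \<Rightarrow> 'h1 \<Rightarrow> complex"
    and smd :: "complex \<Rightarrow> 'd::ab_group_add \<Rightarrow> 'd" and ipd :: "'d \<Rightarrow> 'd \<Rightarrow> complex"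
    and smk :: "complex \<Rightarrow> 'k::ab_group_add \<Rightarrow> 'k" and ipk :: "'k \<Rightarrow> 'k \<Rightarrow> complex"
    and \<iota> :: "'h1 \<Rightarrow> 'h" and iK :: "'k \<Rightarrow> 'd"
    and D :: "'h set" and T :: "'h \<Rightarrow> 'h" and Ds :: "'h set" and Ts :: "'h \<Rightarrow> 'h"
    and DA :: "'h set" and A :: "'h \<Rightarrow> 'h"
    and \<gamma>0 \<gamma>1 :: "'h1 \<Rightarrow> 'k" and \<Gamma>0 \<Gamma>1 :: "'h \<Rightarrow> 'k \<Rightarrow> complex"
    and u v :: 'h
  \<comment> \<open>H0 separable Hilbert space\<close>
  assumes H0: "hilbert sm ip" "hseparable ip"
  \<comment> \<open>T closed densely defined symmetric, with adjoint (Ds, Ts)\<close>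
    and T_lin: "clinear_on sm sm D T"
    and T_dense: "hdense ip D" and T_closed: "closed_op ip D T" and T_sym: "symmetric_op ip D T"
    and Ts_adj: "is_adjoint ip D T Ds Ts"
  \<comment> \<open>H1 dense subspace of H0, Hilbert in its own right, bounded inclusion\<close>
    and H1: "hilbert sm1 ip1" and \<iota>_lin: "clinear_on sm1 sm UNIV \<iota>" and \<iota>_inj: "inj \<iota>"
    and \<iota>_bdd: "bounded_op ip1 ip UNIV \<iota>" and H1_dense: "hdense ip (range \<iota>)"
  \<comment> \<open>K^\<partial> separable Hilbert space, K dense subspace, Hilbert in its own right, bounded inclusion\<close>
    and Kd: "hilbert smd ipd" "hseparable ipd"
    and K: "hilbert smk ipk" and iK_lin: "clinear_on smk smd UNIV iK" and iK_inj: "inj iK"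
    and iK_bdd: "bounded_op ipk ipd UNIV iK" and K_dense: "hdense ipd (range iK)"
  \<comment> \<open>H1 \<subseteq> D(T^*) dense in graph norm, T^* bounded on H1\<close>
    and H1_sub: "range \<iota> \<subseteq> Ds"
    and H1_gdense: "\<forall>x\<in>Ds. \<forall>e>0. \<exists>w. graph_norm ip Ts (x - \<iota> w) < e"
    and Ts_bdd: "bounded_op ip1 ip UNIV (\<lambda>w. Ts (\<iota> w))"
  \<comment> \<open>boundary maps\<close>
    and \<gamma>_lin: "clinear_on sm1 smk UNIV \<gamma>0" "clinear_on sm1 smk UNIV \<gamma>1"
    and \<gamma>_bdd: "bounded_op ip1 ipk UNIV \<gamma>0" "bounded_op ip1 ipk UNIV \<gamma>1"
    and \<gamma>_surj: "\<forall>a b. \<exists>w. \<gamma>0 w = a \<and> \<gamma>1 w = b"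
    and ker_dense: "hdense ip (\<iota> ` {w. \<gamma>0 w = 0 \<and> \<gamma>1 w = 0})"
    and DT: "D = \<iota> ` {w. \<gamma>0 w = 0 \<and> \<gamma>1 w = 0}"
    and Lagrange: "\<forall>w z. ip (Ts (\<iota> w)) (\<iota> z) - ip (\<iota> w) (Ts (\<iota> z)) =
                       ipd (iK (\<gamma>1 w)) (iK (\<gamma>0 z)) - ipd (iK (\<gamma>0 w)) (iK (\<gamma>1 z))"
  \<comment> \<open>\<Gamma>0, \<Gamma>1: the continuous extensions D(T^*) \<rightarrow> K' of \<gamma>0, \<gamma>1\<close>
    and \<Gamma>_range: "\<forall>x\<in>Ds. \<Gamma>0 x \<in> antidual smk ipk" "\<forall>x\<in>Ds. \<Gamma>1 x \<in> antidual smk ipk"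
    and \<Gamma>_lin: "dual_linear_on sm Ds \<Gamma>0" "dual_linear_on sm Ds \<Gamma>1"
    and \<Gamma>_bdd: "graph_bounded ip Ts ipk Ds \<Gamma>0" "graph_bounded ip Ts ipk Ds \<Gamma>1"
    and \<Gamma>_ext: "\<forall>w. \<Gamma>0 (\<iota> w) = embK ipd iK (\<gamma>0 w)" "\<forall>w. \<Gamma>1 (\<iota> w) = embK ipd iK (\<gamma>1 w)"
    and Lagrange_ext: "\<forall>x\<in>Ds. \<forall>z. ip (Ts x) (\<iota> z) - ip x (Ts (\<iota> z)) =
                       pair_KpK (\<Gamma>1 x) (\<gamma>0 z) - pair_KpK (\<Gamma>0 x) (\<gamma>1 z)"
  \<comment> \<open>A self-adjoint, T \<subseteq> A \<subseteq> T^*, D(A) = Ker \<gamma>0, bounded everywhere defined inverse\<close>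
    and A_sa: "self_adjoint_op ip DA A"
    and TA: "D \<subseteq> DA" "\<forall>x\<in>D. A x = T x"
    and ATs: "DA \<subseteq> Ds" "\<forall>x\<in>DA. A x = Ts x"
    and DA: "DA = \<iota> ` {w. \<gamma>0 w = 0}"
    and A_inv: "\<exists>B. clinear_on sm sm UNIV B \<and> bounded_op ip ip UNIV B \<and>
                   (\<forall>x. B x \<in> DA \<and> A (B x) = x) \<and> (\<forall>x\<in>DA. B (A x) = x)"
  \<comment> \<open>\<Gamma>0 restricts to a bijection Ker T^* \<rightarrow> K' (used to define \<gamma>(0))\<close>
    and \<Gamma>0_bij: "bij_betw \<Gamma>0 (kerTs Ds Ts) (antidual smk ipk)"
    and uv: "u \<in> Ds" "v \<in> Ds"
  shows "\<exists>a b. red_Gamma1 Ds Ts \<Gamma>0 \<Gamma>1 u = embK ipd iK a \<and> red_Gamma1 Ds Ts \<Gamma>0 \<Gamma>1 v = embK ipd iK b \<and>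
           ip (Ts u) v - ip u (Ts v) = pair_KKp a (\<Gamma>0 v) - pair_KpK (\<Gamma>0 u) b"
proof -
  have I: "is_inner sm ip" using H0(1) unfolding hilbert_def by blast
  have Id: "is_inner smd ipd" using Kd(1) unfolding hilbert_def by blast
  obtain B where B: "\<forall>y. B y \<in> DA \<and> A (B y) = y" using A_inv by blast
  have Ker_inj: "inj_on \<Gamma>0 (kerTs Ds Ts)" using \<Gamma>0_bij bij_betw_def by blast
  note split = Ds_split_Ker_gamma0[OF I Id iK_lin T_dense Ts_adj ATs B DA H1_sub \<Gamma>_lin Ker_inj \<Gamma>_ext]
  note Lagrange_Ker = Lagrange_ext_Ker_gamma0[OF Lagrange_ext \<Gamma>_range(2)]
  obtain wu where u': "\<gamma>0 wu = 0" "Ts (\<iota> wu) = Ts u"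
    "red_Gamma1 Ds Ts \<Gamma>0 \<Gamma>1 u = embK ipd iK (\<gamma>1 wu)"
    using split[OF uv(1)] by blast
  obtain wv kv where v': "\<gamma>0 wv = 0" "kv \<in> kerTs Ds Ts" "v = \<iota> wv + kv" "Ts (\<iota> wv) = Ts v"
    "\<Gamma>0 v = \<Gamma>0 kv" "red_Gamma1 Ds Ts \<Gamma>0 \<Gamma>1 v = embK ipd iK (\<gamma>1 wv)"
    using split[OF uv(2)] by blast
  have kv: "kv \<in> Ds" "Ts kv = 0" using v'(2) unfolding kerTs_def by auto
  have "ip kv (Ts u) = \<Gamma>0 v (\<gamma>1 wu)"
    using Lagrange_Ker[OF kv(1) u'(1)] kv(2) ip_zero1[OF I] u'(2) v'(5) by simp
  then have "ip (Ts u) kv = cnj (\<Gamma>0 v (\<gamma>1 wu))" using I unfolding is_inner_def by metis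
  then have "ip (Ts u) v - ip u (Ts v) = cnj (\<Gamma>0 v (\<gamma>1 wu)) - \<Gamma>0 u (\<gamma>1 wv)"
    using Lagrange_Ker[OF uv(1) v'(1)] v'(3,4) ip_add2[OF I] by (simp add: algebra_simps)
  then show ?thesis using u'(3) v'(6) unfolding pair_KKp_def pair_KpK_def by blast
qed

end
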